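(* Let $F(\mathbf{w})=\mathbb{E}_{\mathbf{x}\sim\mathcal{X}}[f(\mathbf{w},\mathbf{x})]$ satisfy (PL) with constant $\alpha>0$, (Smooth) with constant $\beta>0$, and (Bounded variance) with constant $V\ge0$; let $F^*=\min_{\mathbf{w}}F(\mathbf{w})$. Let $\eta\in(0,2\beta^{-1})$, $\gamma=\eta\alpha(2-\eta\beta)$, $\Delta=\frac{1}{2\gamma}\eta^2\beta V$, and let $S$ be a positive integer with $S\le\gamma^{-1}$. Run the AdaScale algorithm with scale $S$, constant schedule $\mathrm{lr}(t)=\eta$, and some $T_{\mathrm{SI}}>0$, and let $T$ be its total number of iterations and $\bar r=\frac1T\sum_{t=0}^{T-1}r_t$ its average gain ratio. Then \[ \mathbb{E}[F(\mathbf{w}_T)-F^*]\le(1-\gamma)^{\bar rT}[F(\mathbf{w}_0)-F^*]+\Delta. \]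
   Context: Setting: $\mathcal{X}$ is a distribution over batches; $f(\cdot,\mathbf{x})$ and $F$ are differentiable and $\mathbb{E}_{\mathbf{x}\sim\mathcal{X}}[\nabla_{\mathbf{w}}f(\mathbf{w},\mathbf{x})]=\nabla F(\mathbf{w})$. $\sigma_{\mathbf{g}}^2(\mathbf{w})=\mathrm{tr}\big(\mathrm{cov}_{\mathbf{x}\sim\mathcal{X}}(\nabla_{\mathbf{w}}f(\mathbf{w},\mathbf{x}),\nabla_{\mathbf{w}}f(\mathbf{w},\mathbf{x}))\big)$ and $\mu_{\mathbf{g}}^2(\mathbf{w})=\|\nabla F(\mathbf{w})\|^2$. (PL): $F(\mathbf{w})-F^*\le\frac1{2\alpha}\|\nabla F(\mathbf{w})\|^2$ for all $\mathbf{w}$. (Smooth): $\|\nabla F(\mathbf{w})-\nabla F(\mathbf{w}')\|\le\beta\|\mathbf{w}-\mathbf{w}'\|$. (Bounded variance): $\sigma_{\mathbf{g}}^2(\mathbf{w})\le V$ for all $\mathbf{w}$. AdaScale algorithm (inputs: scale $S$, schedule $\mathrm{lr}$, $T_{\mathrm{SI}}>0$, $\mathbf{w}_0$): set $\tau_0=0$, $t=0$. While $\tau_t<T_{\mathrm{SI}}$: draw $S$ batches $\mathbf{x}^{(1)},\dots,\mathbf{x}^{(S)}\sim\mathcal{X}$ independently of each other and of the past, set $\bar{\mathbf{g}}_t=\frac1S\sum_{i=1}^S\nabla_{\mathbf{w}}f(\mathbf{w}_t,\mathbf{x}^{(i)})$; set the deterministic gain ratio \[ r_t=\frac{\mathbb{E}_{\mathbf{w}_t}[\sigma_{\mathbf{g}}^2(\mathbf{w}_t)+\mu_{\mathbf{g}}^2(\mathbf{w}_t)]}{\mathbb{E}_{\mathbf{w}_t}[\tfrac1S\sigma_{\mathbf{g}}^2(\mathbf{w}_t)+\mu_{\mathbf{g}}^2(\mathbf{w}_t)]}\in[1,S]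 \] (expectation over the distribution of $\mathbf{w}_t$ induced by previous random batches; $r_t:=1$ if the denominator is $0$); set $\eta_t=r_t\cdot\mathrm{lr}(\lfloor\tau_t\rfloor)$, $\mathbf{w}_{t+1}=\mathbf{w}_t-\eta_t\bar{\mathbf{g}}_t$, $\tau_{t+1}=\tau_t+r_t$, $t\leftarrow t+1$. Output the final iterate. Since $r_t\ge1$, the loop terminates after finitely many iterations. *)

theory Defs
  imports "HOL-Probability.Probability"
begin

text \<open>Trace of the covariance matrix of the stochastic gradient at w:
  sum over an orthonormal basis of the variances of the coordinates.\<close>
definition grad_var :: "'x measure \<Rightarrow> ('a::euclidean_space \<Rightarrow> 'x \<Rightarrow> 'a) \<Rightarrow> 'a \<Rightarrow> real" where
  "grad_var M g w = (\<Sum>b\<in>Basis. \<integral>x. ((g w x - (\<integral>y. g w y \<partial>M)) \<bullet> b)^2 \<partial>M)"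

definition grad_sqnorm :: "('a::euclidean_space \<Rightarrow> 'a) \<Rightarrow> 'a \<Rightarrow> real" where
  "grad_sqnorm gradF w = (norm (gradF w))^2"

text \<open>Deterministic gain ratio r_t computed from the law of the random iterate W.\<close>
definition gain_ratio ::
  "'o measure \<Rightarrow> nat \<Rightarrow> ('a \<Rightarrow> real) \<Rightarrow> ('a \<Rightarrow> real) \<Rightarrow> ('o \<Rightarrow> 'a) \<Rightarrow> real" where
  "gain_ratio P S sig mu W =
     (let num = (\<integral>\<omega>. sig (W \<omega>) + mu (W \<omega>) \<partial>P);
          den = (\<integral>\<omega>. sig (W \<omega>) / real S + mu (W \<omega>) \<partial>P)
      in if den = 0 then 1 else num / den)"

text \<open>State (w_t, tau_t) of AdaScale after t iterations (ignoring the stopping test).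
  xs t i is the i-th batch drawn in iteration t.\<close>
fun adascale_state ::
  "'o measure \<Rightarrow> 'x measure \<Rightarrow> ('a::euclidean_space \<Rightarrow> 'x \<Rightarrow> 'a) \<Rightarrow> ('a \<Rightarrow> 'a) \<Rightarrow>
   nat \<Rightarrow> (nat \<Rightarrow> real) \<Rightarrow> 'a \<Rightarrow> (nat \<Rightarrow> nat \<Rightarrow> 'o \<Rightarrow> 'x) \<Rightarrow> nat \<Rightarrow> ('o \<Rightarrow> 'a) \<times> real" where
  "adascale_state P M g gradF S lr w0 xs 0 = ((\<lambda>_. w0), 0)"
| "adascale_state P M g gradF S lr w0 xs (Suc t) =
     (let (W, \<tau>) = adascale_state P M g gradF S lr w0 xs t;
          r = gain_ratio P S (grad_var M g) (grad_sqnorm gradF) W;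
          \<eta> = r * lr (nat \<lfloor>\<tau>\<rfloor>)
      in ((\<lambda>\<omega>. W \<omega> - \<eta> *\<^sub>R ((1 / real S) *\<^sub>R (\<Sum>i<S. g (W \<omega>) (xs t i \<omega>)))), \<tau> + r))"

definition adascale_r where
  "adascale_r P M g gradF S lr w0 xs t =
     gain_ratio P S (grad_var M g) (grad_sqnorm gradF) (fst (adascale_state P M g gradF S lr w0 xs t))"

definition adascale_T where
  "adascale_T P M g gradF S lr w0 xs TSI =
     (LEAST t. snd (adascale_state P M g gradF S lr w0 xs t) \<ge> TSI)"

end

theory Submission
  imports Defs
begin

(*
  For a beta-smooth F the descent inequality bounds the loss after a step of size c along the
  mini-batch gradient g_S by  F w - c |grad F w|^2 + beta/2 c^2 |g_S|^2, and averaging S independent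
  batches gives  E |g_S|^2 = sigma^2/S + mu^2.  The gain ratio r is exactly the factor with
  r (sigma^2/S + mu^2) = sigma^2 + mu^2, so a step of size r eta costs the same second-order term as
  r plain steps of size eta; together with PL the expected suboptimality contracts by 1 - r gamma
  up to an additive r gamma Delta.  Because the gain ratios, hence the step sizes, are
  deterministic, the batches of step t are independent of the iterate w_t, which is what allows
  taking the expectation one step at a time.  Unrolling and Bernoulli's inequality
  1 - r gamma <= (1 - gamma) powr r for r >= 1 give the bound.
*)

lemma smooth_descent_inequality:
  fixes F :: "'a::real_inner \<Rightarrow> real"
  assumes F_grad: "\<And>w. (F has_derivative (\<lambda>h. gradF w \<bullet> h)) (at w)"
    and smooth: "\<And>w w'. norm (gradF w - gradF w') \<le> \<beta> * norm (w - w')"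
  shows "F (x + d) \<le> F x + gradF x \<bullet> d + \<beta> / 2 * (norm d)^2"
proof -
  have line: "((\<lambda>t. F (x + t *\<^sub>R d)) has_real_derivative gradF (x + t *\<^sub>R d) \<bullet> d) (at t)" for t
  proof -
    have "((\<lambda>t. x + t *\<^sub>R d) has_derivative (\<lambda>h. h *\<^sub>R d)) (at t)"
      by (auto intro!: derivative_eq_intros)
    from has_derivative_compose[OF this F_grad]
    have "((\<lambda>t. F (x + t *\<^sub>R d)) has_derivative (\<lambda>h. gradF (x + t *\<^sub>R d) \<bullet> (h *\<^sub>R d))) (at t)"
      by (simp add: o_def)
    moreover have "(\<lambda>h. gradF (x + t *\<^sub>R d) \<bullet> (h *\<^sub>R d)) = (*) (gradF (x + t *\<^sub>R d) \<bullet> d)"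
      by (auto simp: fun_eq_iff)
    ultimately show ?thesis by (simp add: has_field_derivative_def)
  qed
  define h where "h t = F (x + t *\<^sub>R d) - t * (gradF x \<bullet> d) - \<beta> / 2 * t^2 * (norm d)^2" for t
  have "h 1 \<le> h 0"
  proof (rule DERIV_nonpos_imp_nonincreasing[of 0 1])
    fix t :: real assume t: "0 \<le> t" "t \<le> 1"
    have D: "DERIV h t :> gradF (x + t *\<^sub>R d) \<bullet> d - gradF x \<bullet> d - \<beta> / 2 * (2 * t) * (norm d)^2"
      unfolding h_def by (auto intro!: derivative_eq_intros line)
    have "gradF (x + t *\<^sub>R d) \<bullet> d - gradF x \<bullet> d = (gradF (x + t *\<^sub>R d) - gradF x) \<bullet> d"
      by (simp add: inner_diff_left)
    also have "\<dots> \<le> norm (gradF (x + t *\<^sub>R d) - gradF x) * norm d"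
      by (rule norm_cauchy_schwarz)
    also have "\<dots> \<le> (\<beta> * norm (t *\<^sub>R d)) * norm d"
      using smooth[of "x + t *\<^sub>R d" x] by (intro mult_right_mono) auto
    also have "\<dots> = \<beta> / 2 * (2 * t) * (norm d)^2"
      using t by (simp add: power2_eq_square)
    finally show "\<exists>y. DERIV h t :> y \<and> y \<le> 0" using D by auto
  qed simp
  then show ?thesis unfolding h_def by simp
qed

lemma gradient_norm_sq_le_suboptimality:
  fixes F :: "'a::real_inner \<Rightarrow> real"
  assumes F_grad: "\<And>w. (F has_derivative (\<lambda>h. gradF w \<bullet> h)) (at w)"
    and smooth: "\<And>w w'. norm (gradF w - gradF w') \<le> \<beta> * norm (w - w')"
    and \<beta>_pos: "\<beta> > 0" and Fstar_min: "\<And>w. Fstar \<le> F w"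
  shows "(norm (gradF w))^2 \<le> 2 * \<beta> * (F w - Fstar)"
proof -
  let ?d = "- (1 / \<beta>) *\<^sub>R gradF w"
  have "Fstar \<le> F (w + ?d)" by (rule Fstar_min)
  also have "\<dots> \<le> F w + gradF w \<bullet> ?d + \<beta> / 2 * (norm ?d)^2"
    by (rule smooth_descent_inequality[OF F_grad smooth])
  also have "\<dots> = F w - (norm (gradF w))^2 / (2 * \<beta>)"
    using \<beta>_pos by (simp add: power2_eq_square field_simps power_mult_distrib dot_square_norm)
  finally show ?thesis using \<beta>_pos by (simp add: field_simps)
qed

lemma powr_ge_bernoulli:
  fixes x r :: real
  assumes x: "0 \<le> x" "x \<le> 1" and r: "1 \<le> r"
  shows "1 - r * (1 - x) \<le> x powr r"
proof (cases "x = 0")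
  case True
  then show ?thesis using r by simp
next
  case False
  with x have x_pos: "0 < x" by simp
  define h where "h y = y powr r - 1 - r * (y - 1)" for y
  have "h 1 \<le> h x"
  proof (rule DERIV_nonpos_imp_nonincreasing[OF x(2)])
    fix y assume y: "x \<le> y" "y \<le> 1"
    with x_pos have y_pos: "0 < y" by simp
    have "DERIV h y :> r * y powr (r - 1) - r"
      unfolding h_def using y_pos by (auto intro!: derivative_eq_intros)
    moreover have "y powr (r - 1) \<le> 1"
      using y_pos y r by (simp add: powr_le1)
    then have "r * y powr (r - 1) - r \<le> 0"
      using r by (simp add: mult_le_cancel_left1)
    ultimately show "\<exists>d. DERIV h y :> d \<and> d \<le> 0" by blast
  qed
  then show ?thesis unfolding h_def by (simp add: algebra_simps)
qed

text \<open>Unlike \<open>powr_sum\<close>, this also allows the base 0 (where x powr a = 0).\<close>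
lemma powr_sum_nonempty:
  fixes x :: real
  assumes "finite A" "A \<noteq> {}"
  shows "x powr sum f A = (\<Prod>y\<in>A. x powr f y)"
  using assms by (cases "x = 0") (simp_all add: powr_sum card_gt_0_iff)

lemma Least_partial_sum_ge_neq_0:
  fixes r :: "nat \<Rightarrow> real"
  assumes r: "\<And>t. 1 \<le> r t" and a: "0 < a"
  shows "(LEAST t. a \<le> (\<Sum>s<t. r s)) \<noteq> 0"
proof -
  have "a \<le> (\<Sum>s<nat \<lceil>a\<rceil>. r s)"
  proof -
    have "a \<le> (\<Sum>s<nat \<lceil>a\<rceil>. 1)" by simp linarith
    also have "\<dots> \<le> (\<Sum>s<nat \<lceil>a\<rceil>. r s)" by (intro sum_mono r)
    finally show ?thesis .
  qed
  then have "a \<le> (\<Sum>s<(LEAST t. a \<le> (\<Sum>s<t. r s)). r s)" by (rule LeastI)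
  with a show ?thesis by (metis lessThan_0 not_le sum.empty)
qed

lemma gain_ratio_bounds:
  fixes P :: "'o measure" and sig mu :: "'a \<Rightarrow> real" and W :: "'o \<Rightarrow> 'a"
  defines "s \<equiv> \<integral>\<omega>. sig (W \<omega>) \<partial>P" and "m \<equiv> \<integral>\<omega>. mu (W \<omega>) \<partial>P"
  assumes sig_int: "integrable P (\<lambda>\<omega>. sig (W \<omega>))" and mu_int: "integrable P (\<lambda>\<omega>. mu (W \<omega>))"
    and sig_nonneg: "\<And>w. 0 \<le> sig w" and mu_nonneg: "\<And>w. 0 \<le> mu w" and S: "1 \<le> S"
  shows "1 \<le> gain_ratio P S sig mu W" and "gain_ratio P S sig mu W \<le> real S"
    and "gain_ratio P S sig mu W * (s / real S + m) = s + m"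
proof -
  have s: "0 \<le> s" and m: "0 \<le> m"
    unfolding s_def m_def using sig_nonneg mu_nonneg by (simp_all add: integral_nonneg_AE)
  have S_pos: "0 < real S" using S by simp
  have r: "gain_ratio P S sig mu W = (if s / real S + m = 0 then 1 else (s + m) / (s / real S + m))"
    unfolding gain_ratio_def Let_def s_def m_def using sig_int mu_int by simp
  show "1 \<le> gain_ratio P S sig mu W" (is ?A) and "gain_ratio P S sig mu W \<le> real S" (is ?B)
    and "gain_ratio P S sig mu W * (s / real S + m) = s + m" (is ?C)
  proof (atomize (full), cases "s / real S + m = 0")
    case True
    with s m S_pos have "s = 0" "m = 0" by (auto simp: add_nonneg_eq_0_iff)
    with r S show "?A \<and> ?B \<and> ?C" by simp
  next
    case False
    have "0 \<le> s / real S" using s S_pos by simp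
    with m False have d: "0 < s / real S + m" by linarith
    have r': "gain_ratio P S sig mu W = (s + m) / (s / real S + m)" using r False by simp
    have "s / real S \<le> s" using s S by (simp add: divide_le_eq mult_le_cancel_left1)
    then have ?A unfolding r' using d by (simp add: le_divide_eq)
    moreover have "s + m \<le> real S * (s / real S + m)"
      using S_pos S m by (simp add: distrib_left mult_le_cancel_right1)
    then have ?B unfolding r' using d by (simp add: divide_le_eq)
    moreover have ?C unfolding r' using d by simp
    ultimately show "?A \<and> ?B \<and> ?C" by blast
  qed
qed

lemma (in prob_space) indep_var_restrict_disjoint:
  assumes ind: "indep_vars M' X I" and AB: "A \<subseteq> I" "B \<subseteq> I" "A \<inter> B = {}"
  shows "indep_var (PiM A M') (\<lambda>\<omega>. restrict (\<lambda>i. X i \<omega>) A) (PiM B M') (\<lambda>\<omega>. restrict (\<lambda>i. X i \<omega>) B)"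
proof -
  have "indep_vars (\<lambda>j. PiM (case_bool A B j) M') (\<lambda>j \<omega>. restrict (\<lambda>i. X i \<omega>) (case_bool A B j)) UNIV"
    using AB by (intro indep_vars_restrict[OF ind]) (auto simp: disjoint_family_on_def split: bool.splits)
  moreover have "(\<lambda>j. PiM (case_bool A B j) M') = case_bool (PiM A M') (PiM B M')"
    by (auto simp: fun_eq_iff split: bool.splits)
  moreover have "(\<lambda>j \<omega>. restrict (\<lambda>i. X i \<omega>) (case_bool A B j))
      = case_bool (\<lambda>\<omega>. restrict (\<lambda>i. X i \<omega>) A) (\<lambda>\<omega>. restrict (\<lambda>i. X i \<omega>) B)"
    by (auto simp: fun_eq_iff split: bool.splits)
  ultimately show ?thesis unfolding indep_var_def by simp
qed

lemma (in prob_space) nn_integral_indep_var: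
  assumes ind: "indep_var N Z N' B" and h: "h \<in> borel_measurable (N \<Otimes>\<^sub>M N')"
  shows "(\<integral>\<^sup>+\<omega>. h (Z \<omega>, B \<omega>) \<partial>M) = (\<integral>\<^sup>+\<omega>. \<integral>\<^sup>+\<omega>'. h (Z \<omega>, B \<omega>') \<partial>M \<partial>M)"
proof -
  have Z: "Z \<in> measurable M N" and B: "B \<in> measurable M N'"
    using indep_var_rv1[OF ind] indep_var_rv2[OF ind] by auto
  define nZ where "nZ = distr M N Z"
  define nB where "nB = distr M N' B"
  interpret nZ: prob_space nZ unfolding nZ_def by (rule prob_space_distr[OF Z])
  interpret nB: prob_space nB unfolding nB_def by (rule prob_space_distr[OF B])
  have joint: "nZ \<Otimes>\<^sub>M nB = distr M (N \<Otimes>\<^sub>M N') (\<lambda>\<omega>. (Z \<omega>, B \<omega>))"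
    using ind unfolding nZ_def nB_def indep_var_distribution_eq by simp
  have h': "h \<in> borel_measurable (nZ \<Otimes>\<^sub>M nB)"
    using h unfolding nZ_def nB_def
    by (subst measurable_cong_sets[OF sets_pair_measure_cong[OF sets_distr sets_distr] refl])
  have "(\<integral>\<^sup>+\<omega>. h (Z \<omega>, B \<omega>) \<partial>M) = (\<integral>\<^sup>+p. h p \<partial>(nZ \<Otimes>\<^sub>M nB))"
    unfolding joint using Z B h by (subst nn_integral_distr) auto
  also have "\<dots> = (\<integral>\<^sup>+z. \<integral>\<^sup>+b. h (z, b) \<partial>nB \<partial>nZ)"
    by (rule nB.nn_integral_fst[symmetric, OF h'])
  also have "\<dots> = (\<integral>\<^sup>+\<omega>. \<integral>\<^sup>+b. h (Z \<omega>, b) \<partial>nB \<partial>M)"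
    unfolding nZ_def using Z h' by (subst nn_integral_distr) (auto simp: nZ_def)
  also have "\<dots> = (\<integral>\<^sup>+\<omega>. \<integral>\<^sup>+\<omega>'. h (Z \<omega>, B \<omega>') \<partial>M \<partial>M)"
  proof (rule nn_integral_cong)
    fix \<omega> assume "\<omega> \<in> space M"
    then have "(\<lambda>b. h (Z \<omega>, b)) \<in> borel_measurable N'"
      using h Z by (intro measurable_Pair2) (auto simp: measurable_space)
    then show "(\<integral>\<^sup>+b. h (Z \<omega>, b) \<partial>nB) = (\<integral>\<^sup>+\<omega>'. h (Z \<omega>, B \<omega>') \<partial>M)"
      unfolding nB_def using B by (subst nn_integral_distr) auto
  qed
  finally show ?thesis .
qed

locale stochastic_gradient =
  fixes M :: "'x measure" and g :: "'a::euclidean_space \<Rightarrow> 'x \<Rightarrow> 'a" and gradF :: "'a \<Rightarrow> 'a"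
  assumes prob_space_M: "prob_space M"
    and g_meas: "(\<lambda>(w, x). g w x) \<in> borel_measurable (borel \<Otimes>\<^sub>M M)"
    and g_int: "\<And>w. integrable M (g w)"
    and g_sq_int: "\<And>w. integrable M (\<lambda>x. (norm (g w x))^2)"
    and unbiased: "\<And>w. (\<integral>x. g w x \<partial>M) = gradF w"
begin

sublocale M: prob_space M by (rule prob_space_M)

lemma measurable_g [measurable]: "g w \<in> borel_measurable M"
proof -
  have "(\<lambda>x. (w, x)) \<in> measurable M (borel \<Otimes>\<^sub>M M)" by simp
  from measurable_compose[OF this g_meas] show ?thesis by simp
qed

lemma borel_measurable_gradF [measurable]: "gradF \<in> borel_measurable borel"
proof -
  have "(\<lambda>w. \<integral>x. g w x \<partial>M) \<in> borel_measurable borel"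
    using g_meas by (intro M.borel_measurable_lebesgue_integral) (simp add: case_prod_beta)
  moreover have "(\<lambda>w. \<integral>x. g w x \<partial>M) = gradF" using unbiased by auto
  ultimately show ?thesis by simp
qed

lemma integrable_g_inner_sq: "integrable M (\<lambda>x. (g w x \<bullet> b)^2)" if "b \<in> Basis"
proof (rule Bochner_Integration.integrable_bound[OF g_sq_int])
  show "(\<lambda>x. (g w x \<bullet> b)\<^sup>2) \<in> borel_measurable M" by measurable
  show "AE x in M. norm ((g w x \<bullet> b)\<^sup>2) \<le> norm ((norm (g w x))\<^sup>2)"
  proof (intro AE_I2)
    fix x
    have "\<bar>g w x \<bullet> b\<bar> \<le> norm (g w x)" by (rule Basis_le_norm[OF that])
    then have "(g w x \<bullet> b)^2 \<le> (norm (g w x))^2"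
      by (metis abs_ge_zero power2_abs power_mono)
    then show "norm ((g w x \<bullet> b)\<^sup>2) \<le> norm ((norm (g w x))\<^sup>2)" by simp
  qed
qed

lemma grad_var_eq_second_moment: "grad_var M g w = (\<integral>x. (norm (g w x))^2 \<partial>M) - (norm (gradF w))^2"
proof -
  have norm_sq: "(norm v)^2 = (\<Sum>b\<in>Basis. (v \<bullet> b)^2)" for v :: 'a
    unfolding power2_norm_eq_inner euclidean_inner[of v v] by (simp add: power2_eq_square)
  have "grad_var M g w = (\<Sum>b\<in>Basis. \<integral>x. ((g w x - gradF w) \<bullet> b)^2 \<partial>M)"
    unfolding grad_var_def unbiased ..
  also have "\<dots> = (\<Sum>b\<in>Basis. (\<integral>x. (g w x \<bullet> b)^2 \<partial>M) - (gradF w \<bullet> b)^2)"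
  proof (rule sum.cong[OF refl])
    fix b :: 'a assume b: "b \<in> Basis"
    have expand: "((g w x - gradF w) \<bullet> b)^2
        = (g w x \<bullet> b)^2 - 2 * (gradF w \<bullet> b) * (g w x \<bullet> b) + (gradF w \<bullet> b)^2" for x
      by (simp add: inner_diff_left power2_eq_square algebra_simps)
    have "(\<integral>x. g w x \<bullet> b \<partial>M) = gradF w \<bullet> b"
      using g_int unbiased by simp
    then show "(\<integral>x. ((g w x - gradF w) \<bullet> b)^2 \<partial>M) = (\<integral>x. (g w x \<bullet> b)^2 \<partial>M) - (gradF w \<bullet> b)^2"
      unfolding expand using integrable_g_inner_sq[OF b] g_int
      by (simp add: M.prob_space power2_eq_square)
  qed
  also have "\<dots> = (\<integral>x. (\<Sum>b\<in>Basis. (g w x \<bullet> b)^2) \<partial>M) - (\<Sum>b\<in>Basis. (gradF w \<bullet> b)^2)"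
    using integrable_g_inner_sq by (simp add: sum_subtractf)
  also have "\<dots> = (\<integral>x. (norm (g w x))^2 \<partial>M) - (norm (gradF w))^2"
    by (simp add: norm_sq)
  finally show ?thesis .
qed

lemma grad_var_nonneg: "0 \<le> grad_var M g w"
  unfolding grad_var_def by (intro sum_nonneg integral_nonneg_AE) auto

lemma borel_measurable_grad_var [measurable]: "grad_var M g \<in> borel_measurable borel"
proof -
  have "(\<lambda>(w, x). (norm (g w x))^2) \<in> borel_measurable (borel \<Otimes>\<^sub>M M)"
    using g_meas by (simp add: case_prod_beta) measurable
  then have "(\<lambda>w. \<integral>x. (norm (g w x))^2 \<partial>M) \<in> borel_measurable borel"
    using M.borel_measurable_lebesgue_integral[of "\<lambda>w x. (norm (g w x))^2" borel] by simp
  then show ?thesis unfolding grad_var_eq_second_moment[abs_def] by measurable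
qed

end

locale minibatch_sampling = stochastic_gradient M g gradF
  for M :: "'x measure" and g :: "'a::euclidean_space \<Rightarrow> 'x \<Rightarrow> 'a" and gradF +
  fixes P :: "'o measure" and xs :: "nat \<Rightarrow> nat \<Rightarrow> 'o \<Rightarrow> 'x" and S :: nat
  assumes prob_space_P: "prob_space P"
    and batches_indep: "prob_space.indep_vars P (\<lambda>_. M) (\<lambda>(t, i). xs t i) (UNIV \<times> {..<S})"
    and batches_distr: "\<And>t i. i < S \<Longrightarrow> distr P M (xs t i) = M"
    and S_pos: "S \<ge> 1"
begin

sublocale P: prob_space P by (rule prob_space_P)

lemma measurable_batch: "i < S \<Longrightarrow> xs t i \<in> measurable P M"
  using batches_indep unfolding P.indep_vars_def by auto

lemma integrable_batch_iff:
  fixes f :: "'x \<Rightarrow> 'b::{banach, second_countable_topology}"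
  assumes "i < S" "f \<in> borel_measurable M"
  shows "integrable P (\<lambda>\<omega>. f (xs t i \<omega>)) \<longleftrightarrow> integrable M f"
  using integrable_distr_eq[OF measurable_batch[OF assms(1)] assms(2)] batches_distr[OF assms(1)]
  by simp

lemma integral_batch:
  fixes f :: "'x \<Rightarrow> 'b::{banach, second_countable_topology}"
  assumes "i < S" "f \<in> borel_measurable M"
  shows "(\<integral>\<omega>. f (xs t i \<omega>) \<partial>P) = (\<integral>x. f x \<partial>M)"
  using integral_distr[OF measurable_batch[OF assms(1)] assms(2)] batches_distr[OF assms(1)]
  by simp

lemma measurable_batch_gradient [measurable]:
  "i < S \<Longrightarrow> (\<lambda>\<omega>. g w (xs t i \<omega>)) \<in> borel_measurable P"
  using measurable_compose[OF measurable_batch measurable_g] by (simp add: o_def)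

lemma integrable_batch_gradient: "i < S \<Longrightarrow> integrable P (\<lambda>\<omega>. g w (xs t i \<omega>))"
  by (simp add: integrable_batch_iff g_int)

lemma integral_batch_gradient: "i < S \<Longrightarrow> (\<integral>\<omega>. g w (xs t i \<omega>) \<partial>P) = gradF w"
  by (simp add: integral_batch unbiased)

lemma integrable_batch_gradient_sq: "i < S \<Longrightarrow> integrable P (\<lambda>\<omega>. (norm (g w (xs t i \<omega>)))^2)"
  using integrable_batch_iff[of i "\<lambda>x. (norm (g w x))^2"] by (simp add: g_sq_int)

lemma integrable_batch_gradient_inner:
  assumes ij: "i < S" "j < S"
  shows "integrable P (\<lambda>\<omega>. g w (xs t i \<omega>) \<bullet> g w (xs t j \<omega>))"
proof (rule Bochner_Integration.integrable_bound)
  show "integrable P (\<lambda>\<omega>. (norm (g w (xs t i \<omega>)))^2 + (norm (g w (xs t j \<omega>)))^2)"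
    using ij by (simp add: integrable_batch_gradient_sq)
  show "(\<lambda>\<omega>. g w (xs t i \<omega>) \<bullet> g w (xs t j \<omega>)) \<in> borel_measurable P"
    using ij by measurable
  show "AE \<omega> in P. norm (g w (xs t i \<omega>) \<bullet> g w (xs t j \<omega>))
      \<le> norm ((norm (g w (xs t i \<omega>)))^2 + (norm (g w (xs t j \<omega>)))^2)"
  proof (intro AE_I2)
    fix \<omega>
    let ?u = "g w (xs t i \<omega>)" and ?v = "g w (xs t j \<omega>)"
    have "\<bar>?u \<bullet> ?v\<bar> \<le> norm ?u * norm ?v" by (rule Cauchy_Schwarz_ineq2)
    also have "\<dots> \<le> (norm ?u)^2 + (norm ?v)^2"
      using sum_squares_bound[of "norm ?u" "norm ?v"] mult_nonneg_nonneg[OF norm_ge_zero norm_ge_zero, of ?u ?v]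
      by linarith
    finally show "norm (?u \<bullet> ?v) \<le> norm ((norm ?u)^2 + (norm ?v)^2)" by simp
  qed
qed

lemma indep_var_batch_gradient_coordinates:
  assumes ij: "i < S" "j < S" "i \<noteq> j"
  shows "P.indep_var borel (\<lambda>\<omega>. g w (xs t i \<omega>) \<bullet> b) borel (\<lambda>\<omega>. g w (xs t j \<omega>) \<bullet> b)"
proof -
  have ind: "P.indep_var (PiM {(t, i)} (\<lambda>_. M)) (\<lambda>\<omega>. restrict (\<lambda>k. (\<lambda>(t, i). xs t i) k \<omega>) {(t, i)})
      (PiM {(t, j)} (\<lambda>_. M)) (\<lambda>\<omega>. restrict (\<lambda>k. (\<lambda>(t, i). xs t i) k \<omega>) {(t, j)})"
    using ij by (intro P.indep_var_restrict_disjoint[OF batches_indep]) auto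
  have coordinate: "(\<lambda>z. g w (z (t, k)) \<bullet> b) \<in> borel_measurable (PiM {(t, k)} (\<lambda>_. M))" for k
  proof -
    have "(\<lambda>z. z (t, k)) \<in> measurable (PiM {(t, k)} (\<lambda>_. M)) M"
      by (rule measurable_component_singleton) simp
    from measurable_compose[OF this measurable_g] show ?thesis by measurable
  qed
  from P.indep_var_compose[OF ind coordinate coordinate] show ?thesis by (simp add: o_def)
qed

lemma integral_batch_gradient_inner:
  assumes ij: "i < S" "j < S"
  shows "(\<integral>\<omega>. g w (xs t i \<omega>) \<bullet> g w (xs t j \<omega>) \<partial>P)
    = (norm (gradF w))^2 + (if i = j then grad_var M g w else 0)"
proof (cases "i = j")
  case True
  have "(\<integral>\<omega>. (norm (g w (xs t i \<omega>)))^2 \<partial>P) = grad_var M g w + (norm (gradF w))^2"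
    using ij integral_batch[of i "\<lambda>x. (norm (g w x))^2"] by (simp add: grad_var_eq_second_moment)
  with True show ?thesis by (simp add: power2_norm_eq_inner add.commute)
next
  case False
  note ind = indep_var_batch_gradient_coordinates[OF ij False]
  have "(\<integral>\<omega>. g w (xs t i \<omega>) \<bullet> g w (xs t j \<omega>) \<partial>P)
      = (\<integral>\<omega>. (\<Sum>b\<in>Basis. (g w (xs t i \<omega>) \<bullet> b) * (g w (xs t j \<omega>) \<bullet> b)) \<partial>P)"
    by (subst euclidean_inner) rule
  also have "\<dots> = (\<Sum>b\<in>Basis. \<integral>\<omega>. (g w (xs t i \<omega>) \<bullet> b) * (g w (xs t j \<omega>) \<bullet> b) \<partial>P)"
    using ij ind integrable_batch_gradient
    by (intro Bochner_Integration.integral_sum P.indep_var_integrable) auto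
  also have "\<dots> = (\<Sum>b\<in>Basis. (gradF w \<bullet> b) * (gradF w \<bullet> b))"
    using ij ind integrable_batch_gradient integral_batch_gradient
    by (intro sum.cong refl) (simp add: P.indep_var_lebesgue_integral)
  also have "\<dots> = (norm (gradF w))^2"
    by (simp add: euclidean_inner[symmetric] power2_norm_eq_inner)
  finally show ?thesis using False by simp
qed

definition minibatch_mean :: "nat \<Rightarrow> 'a \<Rightarrow> 'o \<Rightarrow> 'a" where
  "minibatch_mean t w \<omega> = (1 / real S) *\<^sub>R (\<Sum>i<S. g w (xs t i \<omega>))"

lemma borel_measurable_minibatch_mean [measurable]: "minibatch_mean t w \<in> borel_measurable P"
  unfolding minibatch_mean_def by (intro borel_measurable_scaleR borel_measurable_const borel_measurable_sum) auto

lemma integrable_minibatch_mean: "integrable P (minibatch_mean t w)"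
  unfolding minibatch_mean_def
  by (intro integrable_scaleR_right Bochner_Integration.integrable_sum integrable_batch_gradient) auto

lemma integral_minibatch_mean: "(\<integral>\<omega>. minibatch_mean t w \<omega> \<partial>P) = gradF w"
proof -
  have "(\<integral>\<omega>. minibatch_mean t w \<omega> \<partial>P) = (1 / real S) *\<^sub>R (\<Sum>i<S. \<integral>\<omega>. g w (xs t i \<omega>) \<partial>P)"
    unfolding minibatch_mean_def
    by (subst integral_scaleR_right, subst Bochner_Integration.integral_sum) (auto intro: integrable_batch_gradient)
  also have "\<dots> = gradF w"
    using S_pos by (simp add: integral_batch_gradient sum_constant_scaleR)
  finally show ?thesis .
qed

lemma norm_minibatch_mean_sq:
  "(norm (minibatch_mean t w \<omega>))^2 = (1 / real S)^2 * (\<Sum>i<S. \<Sum>j<S. g w (xs t i \<omega>) \<bullet> g w (xs t j \<omega>))"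
  unfolding minibatch_mean_def
  by (simp add: power_divide power2_norm_eq_inner inner_sum_left inner_sum_right inner_commute)

lemma integrable_norm_minibatch_mean_sq: "integrable P (\<lambda>\<omega>. (norm (minibatch_mean t w \<omega>))^2)"
  unfolding norm_minibatch_mean_sq
  by (intro integrable_mult_right Bochner_Integration.integrable_sum integrable_batch_gradient_inner) auto

lemma integral_norm_minibatch_mean_sq:
  "(\<integral>\<omega>. (norm (minibatch_mean t w \<omega>))^2 \<partial>P) = grad_var M g w / real S + (norm (gradF w))^2"
proof -
  have "(\<integral>\<omega>. (norm (minibatch_mean t w \<omega>))^2 \<partial>P)
      = (1 / real S)^2 * (\<Sum>i<S. \<Sum>j<S. \<integral>\<omega>. g w (xs t i \<omega>) \<bullet> g w (xs t j \<omega>) \<partial>P)"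
    unfolding norm_minibatch_mean_sq
    by (subst integral_mult_right_zero, subst Bochner_Integration.integral_sum,
        auto intro!: Bochner_Integration.integrable_sum integrable_batch_gradient_inner
             simp: Bochner_Integration.integral_sum integrable_batch_gradient_inner)
  also have "\<dots> = (1 / real S)^2 * (\<Sum>i<S. \<Sum>j<S. (norm (gradF w))^2 + (if i = j then grad_var M g w else 0))"
    by (simp add: integral_batch_gradient_inner)
  also have "\<dots> = (1 / real S)^2 * (real S * real S * (norm (gradF w))^2 + real S * grad_var M g w)"
    by (simp add: sum.distrib algebra_simps)
  also have "\<dots> = grad_var M g w / real S + (norm (gradF w))^2"
    using S_pos by (simp add: field_simps power2_eq_square)
  finally show ?thesis .
qed

text \<open>The SGD iterate as a deterministic function of the array z of all batches, z (t, i) being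
  the i-th batch of step t; it only depends on the batches of earlier steps.\<close>
primrec sgd_path :: "(nat \<Rightarrow> real) \<Rightarrow> 'a \<Rightarrow> nat \<Rightarrow> (nat \<times> nat \<Rightarrow> 'x) \<Rightarrow> 'a" where
  "sgd_path c w0 0 z = w0"
| "sgd_path c w0 (Suc t) z =
     sgd_path c w0 t z - c t *\<^sub>R ((1 / real S) *\<^sub>R (\<Sum>i<S. g (sgd_path c w0 t z) (z (t, i))))"

definition sgd_iterate :: "(nat \<Rightarrow> real) \<Rightarrow> 'a \<Rightarrow> nat \<Rightarrow> 'o \<Rightarrow> 'a" where
  "sgd_iterate c w0 t \<omega> = sgd_path c w0 t (\<lambda>(s, i). xs s i \<omega>)"

lemma sgd_iterate_0: "sgd_iterate c w0 0 \<omega> = w0"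
  by (simp add: sgd_iterate_def)

lemma sgd_iterate_Suc:
  "sgd_iterate c w0 (Suc t) \<omega> = sgd_iterate c w0 t \<omega> - c t *\<^sub>R minibatch_mean t (sgd_iterate c w0 t \<omega>) \<omega>"
  by (simp add: sgd_iterate_def minibatch_mean_def)

lemma sgd_path_cong:
  "(\<And>j. j \<in> {..<t} \<times> {..<S} \<Longrightarrow> z j = z' j) \<Longrightarrow> sgd_path c w0 t z = sgd_path c w0 t z'"
proof (induction t)
  case (Suc t)
  then have "sgd_path c w0 t z = sgd_path c w0 t z'" by auto
  moreover have "z (t, i) = z' (t, i)" if "i < S" for i using Suc.prems that by auto
  ultimately show ?case by simp
qed simp

lemma measurable_g_comp:
  assumes "f \<in> borel_measurable N" "h \<in> measurable N M"
  shows "(\<lambda>x. g (f x) (h x)) \<in> borel_measurable N"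
  using measurable_compose[OF measurable_Pair[OF assms] g_meas] by simp

lemma borel_measurable_sgd_path:
  "{..<t} \<times> {..<S} \<subseteq> J \<Longrightarrow> sgd_path c w0 t \<in> borel_measurable (PiM J (\<lambda>_. M))"
proof (induction t)
  case 0
  have "sgd_path c w0 0 = (\<lambda>_. w0)" by (auto simp: fun_eq_iff)
  then show ?case by simp
next
  case (Suc t)
  have "{..<t} \<times> {..<S} \<subseteq> J" using Suc.prems by auto
  then have IH: "sgd_path c w0 t \<in> borel_measurable (PiM J (\<lambda>_. M))" by (rule Suc.IH)
  have "(\<lambda>z. z (t, i)) \<in> measurable (PiM J (\<lambda>_. M)) M" if "i < S" for i
    using Suc.prems that by (intro measurable_component_singleton) auto
  then have "(\<lambda>z. g (sgd_path c w0 t z) (z (t, i))) \<in> borel_measurable (PiM J (\<lambda>_. M))" if "i < S" for i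
    using that by (intro measurable_g_comp[OF IH])
  with IH show ?case by simp
qed

lemma measurable_restrict_batches:
  "J \<subseteq> UNIV \<times> {..<S} \<Longrightarrow> (\<lambda>\<omega>. restrict (\<lambda>(s, i). xs s i \<omega>) J) \<in> measurable P (PiM J (\<lambda>_. M))"
  by (intro measurable_restrict) (auto intro: measurable_batch)

lemma sgd_iterate_eq_restrict:
  "sgd_iterate c w0 t \<omega> = sgd_path c w0 t (restrict (\<lambda>(s, i). xs s i \<omega>) ({..<t} \<times> {..<S}))"
  unfolding sgd_iterate_def by (rule sgd_path_cong) simp

lemma borel_measurable_sgd_iterate [measurable]: "sgd_iterate c w0 t \<in> borel_measurable P"
proof -
  have "(\<lambda>\<omega>. sgd_path c w0 t (restrict (\<lambda>(s, i). xs s i \<omega>) ({..<t} \<times> {..<S}))) \<in> borel_measurable P"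
    by (rule measurable_compose[OF measurable_restrict_batches borel_measurable_sgd_path]) auto
  then show ?thesis by (simp add: sgd_iterate_eq_restrict[abs_def])
qed

lemma borel_measurable_sgd_step:
  "(\<lambda>p. sgd_path c w0 t (fst p) - c t *\<^sub>R ((1 / real S) *\<^sub>R (\<Sum>i<S. g (sgd_path c w0 t (fst p)) (snd p (t, i)))))
    \<in> borel_measurable (PiM ({..<t} \<times> {..<S}) (\<lambda>_. M) \<Otimes>\<^sub>M PiM ({t} \<times> {..<S}) (\<lambda>_. M))"
  (is "_ \<in> borel_measurable ?N")
proof -
  have path: "(\<lambda>p. sgd_path c w0 t (fst p)) \<in> borel_measurable ?N"
    by (rule measurable_compose[OF measurable_fst borel_measurable_sgd_path]) simp
  have "(\<lambda>p. snd p (t, i)) \<in> measurable ?N M" if "i < S" for i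
    using that by (intro measurable_compose[OF measurable_snd] measurable_component_singleton) auto
  then have "(\<lambda>p. g (sgd_path c w0 t (fst p)) (snd p (t, i))) \<in> borel_measurable ?N" if "i < S" for i
    using that by (intro measurable_g_comp[OF path])
  with path show ?thesis by simp
qed

abbreviation gain :: "('o \<Rightarrow> 'a) \<Rightarrow> real" where
  "gain W \<equiv> gain_ratio P S (grad_var M g) (grad_sqnorm gradF) W"

lemma adascale_state_eq_sgd_iterate:
  assumes c: "\<And>t. c t = adascale_r P M g gradF S lr w0 xs t
                          * lr (nat \<lfloor>\<Sum>s<t. adascale_r P M g gradF S lr w0 xs s\<rfloor>)"
  shows "adascale_state P M g gradF S lr w0 xs t
    = (sgd_iterate c w0 t, \<Sum>s<t. adascale_r P M g gradF S lr w0 xs s)"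
proof (induction t)
  case 0
  show ?case by (simp add: sgd_iterate_def fun_eq_iff)
next
  case (Suc t)
  have "adascale_r P M g gradF S lr w0 xs t = gain (sgd_iterate c w0 t)"
    unfolding adascale_r_def Suc by simp
  with Suc show ?case by (simp add: c[of t] fun_eq_iff sgd_iterate_Suc minibatch_mean_def Let_def)
qed

end

locale smooth_pl_sgd = minibatch_sampling M g gradF P xs S
  for M :: "'x measure" and g :: "'a::euclidean_space \<Rightarrow> 'x \<Rightarrow> 'a" and gradF
    and P :: "'o measure" and xs S +
  fixes F :: "'a \<Rightarrow> real" and Fstar \<alpha> \<beta> V \<eta> \<gamma> \<Delta> :: real
  assumes F_grad: "\<And>w. (F has_derivative (\<lambda>h. gradF w \<bullet> h)) (at w)"
    and smooth: "\<And>w w'. norm (gradF w - gradF w') \<le> \<beta> * norm (w - w')"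
    and Fstar_min: "\<And>w. Fstar \<le> F w"
    and PL: "\<And>w. F w - Fstar \<le> 1 / (2 * \<alpha>) * (norm (gradF w))^2"
    and bounded_var: "\<And>w. grad_var M g w \<le> V"
    and \<alpha>_pos: "\<alpha> > 0" and \<beta>_pos: "\<beta> > 0" and V_nonneg: "V \<ge> 0"
    and \<eta>_pos: "0 < \<eta>" and \<eta>_bound: "\<eta> < 2 / \<beta>"
    and \<gamma>_def: "\<gamma> = \<eta> * \<alpha> * (2 - \<eta> * \<beta>)"
    and \<Delta>_def: "\<Delta> = 1 / (2 * \<gamma>) * \<eta>^2 * \<beta> * V"
    and S_bound: "real S \<le> 1 / \<gamma>"
begin

lemma borel_measurable_F [measurable]: "F \<in> borel_measurable borel"
proof -
  have "continuous_on UNIV F"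
    using has_derivative_continuous[OF F_grad] by (intro continuous_at_imp_continuous_on) auto
  then show ?thesis by (rule borel_measurable_continuous_onI)
qed

lemma \<gamma>_pos: "0 < \<gamma>"
proof -
  have "\<eta> * \<beta> < 2" using \<eta>_bound \<beta>_pos by (simp add: field_simps)
  then show ?thesis unfolding \<gamma>_def using \<eta>_pos \<alpha>_pos by simp
qed

lemma S_mult_\<gamma>_le_1: "real S * \<gamma> \<le> 1"
  using S_bound \<gamma>_pos by (simp add: field_simps)

lemma \<gamma>_le_1: "\<gamma> \<le> 1"
  using S_mult_\<gamma>_le_1 S_pos \<gamma>_pos
  by (metis dual_order.trans mult_le_cancel_right1 of_nat_1 of_nat_le_iff order.strict_iff_not)

lemma \<Delta>_nonneg: "0 \<le> \<Delta>"
  unfolding \<Delta>_def using \<gamma>_pos \<beta>_pos V_nonneg by simp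

lemma \<gamma>_mult_\<Delta>: "\<gamma> * \<Delta> = \<beta> * \<eta>^2 / 2 * V"
  unfolding \<Delta>_def using \<gamma>_pos by (simp add: field_simps)

definition step_bound :: "real \<Rightarrow> 'a \<Rightarrow> real" where
  "step_bound c w = F w - Fstar - c * (norm (gradF w))^2
     + \<beta> / 2 * c^2 * (grad_var M g w / real S + (norm (gradF w))^2)"

lemma borel_measurable_step_bound [measurable]: "step_bound c \<in> borel_measurable borel"
  unfolding step_bound_def by measurable

lemma
  shows integrable_step_from: "integrable P (\<lambda>\<omega>. F (w - c *\<^sub>R minibatch_mean t w \<omega>) - Fstar)"
    and expected_step_from_le: "(\<integral>\<omega>. F (w - c *\<^sub>R minibatch_mean t w \<omega>) - Fstar \<partial>P) \<le> step_bound c w"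
proof -
  define R where "R \<omega> = F w - Fstar - c * (gradF w \<bullet> minibatch_mean t w \<omega>)
    + \<beta> / 2 * c^2 * (norm (minibatch_mean t w \<omega>))^2" for \<omega>
  have descent: "F (w - c *\<^sub>R minibatch_mean t w \<omega>) - Fstar \<le> R \<omega>" for \<omega>
    using smooth_descent_inequality[OF F_grad smooth, of w "- c *\<^sub>R minibatch_mean t w \<omega>"]
    unfolding R_def by (simp add: power_mult_distrib)
  have R_int: "integrable P R"
    unfolding R_def using integrable_minibatch_mean integrable_norm_minibatch_mean_sq by auto
  have "(\<integral>\<omega>. gradF w \<bullet> minibatch_mean t w \<omega> \<partial>P) = (norm (gradF w))^2"
    using integrable_minibatch_mean[of t w] by (simp add: integral_minibatch_mean power2_norm_eq_inner)
  then have "(\<integral>\<omega>. R \<omega> \<partial>P) = step_bound c w"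
    unfolding R_def step_bound_def
    using integrable_minibatch_mean[of t w] integrable_norm_minibatch_mean_sq[of t w]
    by (simp add: integral_norm_minibatch_mean_sq P.prob_space)
  moreover show int: "integrable P (\<lambda>\<omega>. F (w - c *\<^sub>R minibatch_mean t w \<omega>) - Fstar)"
  proof (rule Bochner_Integration.integrable_bound[OF R_int], measurable, intro AE_I2)
    fix \<omega>
    have "0 \<le> F (w - c *\<^sub>R minibatch_mean t w \<omega>) - Fstar" using Fstar_min by simp
    then show "norm (F (w - c *\<^sub>R minibatch_mean t w \<omega>) - Fstar) \<le> norm (R \<omega>)"
      using descent[of \<omega>] by simp
  qed
  ultimately show "(\<integral>\<omega>. F (w - c *\<^sub>R minibatch_mean t w \<omega>) - Fstar \<partial>P) \<le> step_bound c w"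
    using integral_mono[OF int R_int descent] by simp
qed

lemma step_bound_nonneg: "0 \<le> step_bound c w"
proof -
  have "0 \<le> (\<integral>\<omega>. F (w - c *\<^sub>R minibatch_mean 0 w \<omega>) - Fstar \<partial>P)"
    using Fstar_min by (intro integral_nonneg_AE) auto
  also have "\<dots> \<le> step_bound c w" by (rule expected_step_from_le)
  finally show ?thesis .
qed

text \<open>The batches of step t are independent of the past batches, which determine the iterate.\<close>
lemma nn_integral_suboptimality_Suc_le:
  "(\<integral>\<^sup>+\<omega>. ennreal (F (sgd_iterate c w0 (Suc t) \<omega>) - Fstar) \<partial>P)
    \<le> (\<integral>\<^sup>+\<omega>. ennreal (step_bound (c t) (sgd_iterate c w0 t \<omega>)) \<partial>P)"
proof -
  define A where "A = {..<t} \<times> {..<S}"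
  define B where "B = {t} \<times> {..<S}"
  define past where "past \<omega> = restrict (\<lambda>(s, i). xs s i \<omega>) A" for \<omega>
  define current where "current \<omega> = restrict (\<lambda>(s, i). xs s i \<omega>) B" for \<omega>
  define step where "step p = sgd_path c w0 t (fst p)
    - c t *\<^sub>R ((1 / real S) *\<^sub>R (\<Sum>i<S. g (sgd_path c w0 t (fst p)) (snd p (t, i))))" for p
  define h where "h p = ennreal (F (step p) - Fstar)" for p
  have "P.indep_var (PiM A (\<lambda>_. M)) (\<lambda>\<omega>. restrict (\<lambda>k. (\<lambda>(s, i). xs s i) k \<omega>) A)
      (PiM B (\<lambda>_. M)) (\<lambda>\<omega>. restrict (\<lambda>k. (\<lambda>(s, i). xs s i) k \<omega>) B)"
    unfolding A_def B_def by (rule P.indep_var_restrict_disjoint[OF batches_indep]) auto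
  then have ind: "P.indep_var (PiM A (\<lambda>_. M)) past (PiM B (\<lambda>_. M)) current"
    unfolding past_def current_def by (simp add: case_prod_unfold)
  have h_meas: "h \<in> borel_measurable (PiM A (\<lambda>_. M) \<Otimes>\<^sub>M PiM B (\<lambda>_. M))"
    using borel_measurable_sgd_step[of c w0 t] unfolding h_def step_def A_def B_def by measurable
  have h_eq: "h (past \<omega>, current \<omega>')
      = ennreal (F (sgd_iterate c w0 t \<omega> - c t *\<^sub>R minibatch_mean t (sgd_iterate c w0 t \<omega>) \<omega>') - Fstar)"
    for \<omega> \<omega>'
    by (simp add: h_def step_def minibatch_mean_def sgd_iterate_eq_restrict past_def current_def A_def B_def)
  have "(\<integral>\<^sup>+\<omega>. ennreal (F (sgd_iterate c w0 (Suc t) \<omega>) - Fstar) \<partial>P) = (\<integral>\<^sup>+\<omega>. h (past \<omega>, current \<omega>) \<partial>P)"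
    by (simp add: h_eq sgd_iterate_Suc)
  also have "\<dots> = (\<integral>\<^sup>+\<omega>. \<integral>\<^sup>+\<omega>'. h (past \<omega>, current \<omega>') \<partial>P \<partial>P)"
    by (rule P.nn_integral_indep_var[OF ind h_meas])
  also have "\<dots> \<le> (\<integral>\<^sup>+\<omega>. ennreal (step_bound (c t) (sgd_iterate c w0 t \<omega>)) \<partial>P)"
  proof (rule nn_integral_mono)
    fix \<omega>
    let ?w = "sgd_iterate c w0 t \<omega>"
    have "(\<integral>\<^sup>+\<omega>'. h (past \<omega>, current \<omega>') \<partial>P)
        = ennreal (\<integral>\<omega>'. F (?w - c t *\<^sub>R minibatch_mean t ?w \<omega>') - Fstar \<partial>P)"
      unfolding h_eq using Fstar_min by (intro nn_integral_eq_integral integrable_step_from) auto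
    also have "\<dots> \<le> ennreal (step_bound (c t) ?w)"
      by (intro ennreal_leI expected_step_from_le)
    finally show "(\<integral>\<^sup>+\<omega>'. h (past \<omega>, current \<omega>') \<partial>P) \<le> ennreal (step_bound (c t) ?w)" .
  qed
  finally show ?thesis .
qed

lemma integrable_grad_var_comp:
  assumes "W \<in> borel_measurable P"
  shows "integrable P (\<lambda>\<omega>. grad_var M g (W \<omega>))"
proof (rule Bochner_Integration.integrable_bound[of _ "\<lambda>_. V"])
  show "(\<lambda>\<omega>. grad_var M g (W \<omega>)) \<in> borel_measurable P" using assms by measurable
  show "AE \<omega> in P. norm (grad_var M g (W \<omega>)) \<le> norm V"
    using bounded_var grad_var_nonneg V_nonneg by (intro AE_I2) simp
qed simp

lemma integrable_norm_gradF_sq_comp: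
  assumes "W \<in> borel_measurable P" and "integrable P (\<lambda>\<omega>. F (W \<omega>) - Fstar)"
  shows "integrable P (\<lambda>\<omega>. (norm (gradF (W \<omega>)))^2)"
proof (rule Bochner_Integration.integrable_bound[of _ "\<lambda>\<omega>. 2 * \<beta> * (F (W \<omega>) - Fstar)"])
  show "integrable P (\<lambda>\<omega>. 2 * \<beta> * (F (W \<omega>) - Fstar))" using assms(2) by simp
  show "(\<lambda>\<omega>. (norm (gradF (W \<omega>)))^2) \<in> borel_measurable P" using assms(1) by measurable
  have "(norm (gradF w))^2 \<le> 2 * \<beta> * (F w - Fstar)" for w
    by (rule gradient_norm_sq_le_suboptimality[OF F_grad smooth \<beta>_pos Fstar_min])
  then show "AE \<omega> in P. norm ((norm (gradF (W \<omega>)))^2) \<le> norm (2 * \<beta> * (F (W \<omega>) - Fstar))"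
    by (intro AE_I2) (metis abs_of_nonneg order_trans real_norm_def zero_le_power2)
qed

lemma integrable_suboptimality_iterate: "integrable P (\<lambda>\<omega>. F (sgd_iterate c w0 t \<omega>) - Fstar)"
proof (induction t)
  case 0
  show ?case by (simp add: sgd_iterate_0)
next
  case (Suc t)
  let ?W = "sgd_iterate c w0 t"
  have "integrable P (\<lambda>\<omega>. step_bound (c t) (?W \<omega>))"
    unfolding step_bound_def
    using Suc.IH integrable_grad_var_comp[of ?W] integrable_norm_gradF_sq_comp[of ?W] by simp
  then have "(\<integral>\<^sup>+\<omega>. ennreal (F (sgd_iterate c w0 (Suc t) \<omega>) - Fstar) \<partial>P) < \<infinity>"
    using nn_integral_suboptimality_Suc_le[of c w0 t] step_bound_nonneg
    by (simp add: nn_integral_eq_integral le_less_trans)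
  moreover have "(\<integral>\<^sup>+\<omega>. ennreal (norm (F (sgd_iterate c w0 (Suc t) \<omega>) - Fstar)) \<partial>P)
      = (\<integral>\<^sup>+\<omega>. ennreal (F (sgd_iterate c w0 (Suc t) \<omega>) - Fstar) \<partial>P)"
    using Fstar_min by (intro nn_integral_cong) simp
  moreover have "(\<lambda>\<omega>. F (sgd_iterate c w0 (Suc t) \<omega>) - Fstar) \<in> borel_measurable P"
    by measurable
  ultimately show ?case by (intro integrableI_bounded) simp_all
qed

lemma expected_suboptimality_Suc_le:
  "(\<integral>\<omega>. F (sgd_iterate c w0 (Suc t) \<omega>) - Fstar \<partial>P)
    \<le> (\<integral>\<omega>. step_bound (c t) (sgd_iterate c w0 t \<omega>) \<partial>P)"
proof -
  let ?W = "sgd_iterate c w0 t"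
  have int: "integrable P (\<lambda>\<omega>. step_bound (c t) (?W \<omega>))"
    unfolding step_bound_def using integrable_suboptimality_iterate
      integrable_grad_var_comp[of ?W] integrable_norm_gradF_sq_comp[of ?W] by simp
  have "ennreal (\<integral>\<omega>. F (sgd_iterate c w0 (Suc t) \<omega>) - Fstar \<partial>P)
      \<le> ennreal (\<integral>\<omega>. step_bound (c t) (?W \<omega>) \<partial>P)"
    using nn_integral_suboptimality_Suc_le[of c w0 t] Fstar_min step_bound_nonneg
      nn_integral_eq_integral[OF integrable_suboptimality_iterate]
      nn_integral_eq_integral[OF int]
    by simp
  moreover have "0 \<le> (\<integral>\<omega>. step_bound (c t) (?W \<omega>) \<partial>P)"
    using step_bound_nonneg by (simp add: integral_nonneg_AE)
  ultimately show ?thesis by (simp add: ennreal_le_iff)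
qed

lemma gain_iterate:
  fixes c :: "nat \<Rightarrow> real" and w0 :: 'a and t :: nat
  defines "W \<equiv> sgd_iterate c w0 t"
  shows "1 \<le> gain W" and "gain W \<le> real S"
    and "gain W * ((\<integral>\<omega>. grad_var M g (W \<omega>) \<partial>P) / real S + (\<integral>\<omega>. (norm (gradF (W \<omega>)))^2 \<partial>P))
      = (\<integral>\<omega>. grad_var M g (W \<omega>) \<partial>P) + (\<integral>\<omega>. (norm (gradF (W \<omega>)))^2 \<partial>P)"
proof -
  have "integrable P (\<lambda>\<omega>. grad_var M g (W \<omega>))"
    unfolding W_def by (rule integrable_grad_var_comp) measurable
  moreover have "integrable P (\<lambda>\<omega>. grad_sqnorm gradF (W \<omega>))"
    unfolding W_def grad_sqnorm_def
    by (rule integrable_norm_gradF_sq_comp[OF _ integrable_suboptimality_iterate]) measurable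
  ultimately have "1 \<le> gain W \<and> gain W \<le> real S \<and>
      gain W * ((\<integral>\<omega>. grad_var M g (W \<omega>) \<partial>P) / real S + (\<integral>\<omega>. grad_sqnorm gradF (W \<omega>) \<partial>P))
      = (\<integral>\<omega>. grad_var M g (W \<omega>) \<partial>P) + (\<integral>\<omega>. grad_sqnorm gradF (W \<omega>) \<partial>P)"
    using gain_ratio_bounds[of P "grad_var M g" W "grad_sqnorm gradF" S] grad_var_nonneg S_pos
    by (simp add: grad_sqnorm_def)
  then show "1 \<le> gain W" and "gain W \<le> real S"
    and "gain W * ((\<integral>\<omega>. grad_var M g (W \<omega>) \<partial>P) / real S + (\<integral>\<omega>. (norm (gradF (W \<omega>)))^2 \<partial>P))
      = (\<integral>\<omega>. grad_var M g (W \<omega>) \<partial>P) + (\<integral>\<omega>. (norm (gradF (W \<omega>)))^2 \<partial>P)"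
    by (simp_all add: grad_sqnorm_def)
qed

text \<open>Here the gain ratio enters: r (s/S + m) = s + m makes the second-order term of one step of
  size r \<eta> equal to that of r plain steps of size \<eta>.\<close>
lemma gain_step_bound_le_contraction:
  fixes r e s m :: real
  assumes r: "1 \<le> r" "r * (s / real S + m) = s + m" and PL_e: "2 * \<alpha> * e \<le> m" and s_V: "s \<le> V"
  shows "e - r * \<eta> * m + \<beta> / 2 * (r * \<eta>)^2 * (s / real S + m) \<le> (1 - r * \<gamma>) * e + r * \<gamma> * \<Delta>"
proof -
  have \<eta>\<beta>: "\<eta> * \<beta> < 2" using \<eta>_bound \<beta>_pos by (simp add: field_simps)
  have "\<beta> / 2 * (r * \<eta>)^2 * (s / real S + m) = \<beta> / 2 * (r * \<eta>^2 * (r * (s / real S + m)))"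
    by (simp add: power2_eq_square)
  also have "\<dots> = \<beta> / 2 * (r * \<eta>^2 * (s + m))" by (simp only: r(2))
  finally have "e - r * \<eta> * m + \<beta> / 2 * (r * \<eta>)^2 * (s / real S + m)
      = e - r * \<eta> * (1 - \<eta> * \<beta> / 2) * m + r * (\<beta> * \<eta>^2 / 2) * s"
    by (simp add: algebra_simps power2_eq_square)
  also have "\<dots> \<le> e - r * \<eta> * (1 - \<eta> * \<beta> / 2) * (2 * \<alpha> * e) + r * (\<beta> * \<eta>^2 / 2) * V"
  proof -
    have "0 \<le> r * \<eta> * (1 - \<eta> * \<beta> / 2)" "0 \<le> r * (\<beta> * \<eta>^2 / 2)"
      using r(1) \<eta>_pos \<eta>\<beta> \<beta>_pos by simp_all
    with PL_e s_V show ?thesis by (smt (verit) mult_left_mono)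
  qed
  also have "\<dots> = (1 - r * \<gamma>) * e + r * \<gamma> * \<Delta>"
  proof -
    have "r * \<gamma> * e = r * \<eta> * (1 - \<eta> * \<beta> / 2) * (2 * \<alpha> * e)"
      unfolding \<gamma>_def by (simp add: algebra_simps)
    moreover have "r * \<gamma> * \<Delta> = r * (\<beta> * \<eta>^2 / 2) * V"
      using \<gamma>_mult_\<Delta> by (simp add: algebra_simps)
    moreover have "(1 - r * \<gamma>) * e + r * \<gamma> * \<Delta> = e - r * \<gamma> * e + r * \<gamma> * \<Delta>"
      by (simp add: algebra_simps)
    ultimately show ?thesis by linarith
  qed
  finally show ?thesis .
qed

lemma expected_suboptimality_contraction:
  assumes c: "c t = gain (sgd_iterate c w0 t) * \<eta>"
  shows "(\<integral>\<omega>. F (sgd_iterate c w0 (Suc t) \<omega>) - Fstar \<partial>P)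
    \<le> (1 - gain (sgd_iterate c w0 t) * \<gamma>) * (\<integral>\<omega>. F (sgd_iterate c w0 t \<omega>) - Fstar \<partial>P)
       + gain (sgd_iterate c w0 t) * \<gamma> * \<Delta>"
proof -
  define W where "W = sgd_iterate c w0 t"
  define r where "r = gain W"
  define e where "e = (\<integral>\<omega>. F (W \<omega>) - Fstar \<partial>P)"
  define s where "s = (\<integral>\<omega>. grad_var M g (W \<omega>) \<partial>P)"
  define m where "m = (\<integral>\<omega>. (norm (gradF (W \<omega>)))^2 \<partial>P)"
  have e_int: "integrable P (\<lambda>\<omega>. F (W \<omega>) - Fstar)"
    unfolding W_def by (rule integrable_suboptimality_iterate)
  have s_int: "integrable P (\<lambda>\<omega>. grad_var M g (W \<omega>))"
    unfolding W_def by (rule integrable_grad_var_comp) measurable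
  have m_int: "integrable P (\<lambda>\<omega>. (norm (gradF (W \<omega>)))^2)"
    using e_int unfolding W_def by (intro integrable_norm_gradF_sq_comp) measurable
  have PL_e: "2 * \<alpha> * e \<le> m"
  proof -
    have "e \<le> (\<integral>\<omega>. 1 / (2 * \<alpha>) * (norm (gradF (W \<omega>)))^2 \<partial>P)"
      unfolding e_def by (rule integral_mono[OF e_int]) (use m_int PL in auto)
    then show ?thesis using \<alpha>_pos unfolding m_def by (simp add: field_simps)
  qed
  have s_V: "s \<le> V"
    using integral_mono[OF s_int, of "\<lambda>_. V"] bounded_var unfolding s_def by (simp add: P.prob_space)
  have c': "c t = r * \<eta>" using c unfolding r_def W_def .
  have "(\<integral>\<omega>. F (sgd_iterate c w0 (Suc t) \<omega>) - Fstar \<partial>P) \<le> (\<integral>\<omega>. step_bound (c t) (W \<omega>) \<partial>P)"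
    unfolding W_def by (rule expected_suboptimality_Suc_le)
  also have "\<dots> = e - r * \<eta> * m + \<beta> / 2 * (r * \<eta>)^2 * (s / real S + m)"
    unfolding step_bound_def e_def s_def m_def c' using e_int s_int m_int by simp
  also have "\<dots> \<le> (1 - r * \<gamma>) * e + r * \<gamma> * \<Delta>"
    using PL_e s_V unfolding r_def s_def m_def W_def
    by (intro gain_step_bound_le_contraction gain_iterate(1,3))
  finally show ?thesis unfolding r_def e_def W_def .
qed

lemma contraction_factor_bounds:
  shows "0 \<le> 1 - gain (sgd_iterate c w0 t) * \<gamma>"
    and "1 - gain (sgd_iterate c w0 t) * \<gamma> \<le> (1 - \<gamma>) powr gain (sgd_iterate c w0 t)"
proof -
  note r = gain_iterate(1,2)[of c w0 t]
  have "gain (sgd_iterate c w0 t) * \<gamma> \<le> real S * \<gamma>"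
    using r \<gamma>_pos by (intro mult_right_mono) auto
  then show "0 \<le> 1 - gain (sgd_iterate c w0 t) * \<gamma>" using S_mult_\<gamma>_le_1 by linarith
  show "1 - gain (sgd_iterate c w0 t) * \<gamma> \<le> (1 - \<gamma>) powr gain (sgd_iterate c w0 t)"
    using powr_ge_bernoulli[of "1 - \<gamma>" "gain (sgd_iterate c w0 t)"] \<gamma>_pos \<gamma>_le_1 r by simp
qed

lemma expected_suboptimality_le_prod:
  assumes c: "\<And>t. c t = gain (sgd_iterate c w0 t) * \<eta>"
  shows "(\<integral>\<omega>. F (sgd_iterate c w0 t \<omega>) - Fstar \<partial>P)
    \<le> (\<Prod>s<t. 1 - gain (sgd_iterate c w0 s) * \<gamma>) * (F w0 - Fstar) + \<Delta>"
proof (induction t)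
  case 0
  show ?case using \<Delta>_nonneg by (simp add: sgd_iterate_0 P.prob_space)
next
  case (Suc t)
  let ?r = "\<lambda>s. gain (sgd_iterate c w0 s)"
  have "(\<integral>\<omega>. F (sgd_iterate c w0 (Suc t) \<omega>) - Fstar \<partial>P)
      \<le> (1 - ?r t * \<gamma>) * (\<integral>\<omega>. F (sgd_iterate c w0 t \<omega>) - Fstar \<partial>P) + ?r t * \<gamma> * \<Delta>"
    by (rule expected_suboptimality_contraction[OF c])
  also have "\<dots> \<le> (1 - ?r t * \<gamma>) * ((\<Prod>s<t. 1 - ?r s * \<gamma>) * (F w0 - Fstar) + \<Delta>) + ?r t * \<gamma> * \<Delta>"
    using Suc.IH contraction_factor_bounds(1) by (intro add_right_mono mult_left_mono)
  also have "\<dots> = (\<Prod>s<Suc t. 1 - ?r s * \<gamma>) * (F w0 - Fstar) + \<Delta>"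
    by (simp add: algebra_simps)
  finally show ?case .
qed

lemma expected_suboptimality_le_powr:
  assumes c: "\<And>t. c t = gain (sgd_iterate c w0 t) * \<eta>" and T: "T \<noteq> 0"
  shows "(\<integral>\<omega>. F (sgd_iterate c w0 T \<omega>) - Fstar \<partial>P)
    \<le> (1 - \<gamma>) powr (\<Sum>s<T. gain (sgd_iterate c w0 s)) * (F w0 - Fstar) + \<Delta>"
proof -
  have "(\<Prod>s<T. 1 - gain (sgd_iterate c w0 s) * \<gamma>) \<le> (\<Prod>s<T. (1 - \<gamma>) powr gain (sgd_iterate c w0 s))"
    using contraction_factor_bounds by (intro prod_mono) auto
  also have "\<dots> = (1 - \<gamma>) powr (\<Sum>s<T. gain (sgd_iterate c w0 s))"
    using T by (subst powr_sum_nonempty) auto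
  finally have "(\<Prod>s<T. 1 - gain (sgd_iterate c w0 s) * \<gamma>) * (F w0 - Fstar)
      \<le> (1 - \<gamma>) powr (\<Sum>s<T. gain (sgd_iterate c w0 s)) * (F w0 - Fstar)"
    using Fstar_min by (intro mult_right_mono) auto
  with expected_suboptimality_le_prod[OF c, of T] show ?thesis by linarith
qed

end

theorem theorem2:
  fixes P :: "'o measure" and M :: "'x measure"
    and f :: "'a::euclidean_space \<Rightarrow> 'x \<Rightarrow> real" and g :: "'a \<Rightarrow> 'x \<Rightarrow> 'a"
    and F :: "'a \<Rightarrow> real" and gradF :: "'a \<Rightarrow> 'a"
    and xs :: "nat \<Rightarrow> nat \<Rightarrow> 'o \<Rightarrow> 'x"
    and \<alpha> \<beta> V Fstar \<eta> \<gamma> \<Delta> TSI :: real and S :: nat and w0 :: 'a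
  assumes P: "prob_space P" and M: "prob_space M"
    and batches_indep: "prob_space.indep_vars P (\<lambda>_. M) (\<lambda>(t, i). xs t i) (UNIV \<times> {..<S})"
    and batches_distr: "\<And>t i. i < S \<Longrightarrow> distr P M (xs t i) = M"
    and g_meas: "(\<lambda>(w, x). g w x) \<in> borel_measurable (borel \<Otimes>\<^sub>M M)"
    and f_grad: "\<And>w x. ((\<lambda>v. f v x) has_derivative (\<lambda>h. g w x \<bullet> h)) (at w)"
    and F_grad: "\<And>w. (F has_derivative (\<lambda>h. gradF w \<bullet> h)) (at w)"
    and F_int: "\<And>w. integrable M (f w)"
    and F_def: "\<And>w. F w = (\<integral>x. f w x \<partial>M)"
    and g_int: "\<And>w. integrable M (g w)"
    and g_sq_int: "\<And>w. integrable M (\<lambda>x. (norm (g w x))^2)"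
    and unbiased: "\<And>w. (\<integral>x. g w x \<partial>M) = gradF w"
    and Fstar_min: "\<And>w. Fstar \<le> F w" and Fstar_att: "\<exists>w. F w = Fstar"
    and \<alpha>_pos: "\<alpha> > 0" and \<beta>_pos: "\<beta> > 0" and V_nonneg: "V \<ge> 0"
    and PL: "\<And>w. F w - Fstar \<le> 1 / (2 * \<alpha>) * (norm (gradF w))^2"
    and smooth: "\<And>w w'. norm (gradF w - gradF w') \<le> \<beta> * norm (w - w')"
    and bounded_var: "\<And>w. grad_var M g w \<le> V"
    and \<eta>_pos: "0 < \<eta>" and \<eta>_bound: "\<eta> < 2 / \<beta>"
    and \<gamma>_def: "\<gamma> = \<eta> * \<alpha> * (2 - \<eta> * \<beta>)"
    and \<Delta>_def: "\<Delta> = 1 / (2 * \<gamma>) * \<eta>^2 * \<beta> * V"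
    and S_pos: "S \<ge> 1" and S_bound: "real S \<le> 1 / \<gamma>"
    and TSI_pos: "TSI > 0"
  shows "let T = adascale_T P M g gradF S (\<lambda>_. \<eta>) w0 xs TSI;
             rbar = (\<Sum>t<T. adascale_r P M g gradF S (\<lambda>_. \<eta>) w0 xs t) / real T;
             wT = fst (adascale_state P M g gradF S (\<lambda>_. \<eta>) w0 xs T)
         in (\<integral>\<omega>. F (wT \<omega>) - Fstar \<partial>P)
              \<le> (1 - \<gamma>) powr (rbar * real T) * (F w0 - Fstar) + \<Delta>"
proof -
  interpret smooth_pl_sgd M g gradF P xs S F Fstar \<alpha> \<beta> V \<eta> \<gamma> \<Delta>
    by (intro smooth_pl_sgd.intro minibatch_sampling.intro stochastic_gradient.intro
        minibatch_sampling_axioms.intro smooth_pl_sgd_axioms.intro) (fact assms)+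
  define r where "r t = adascale_r P M g gradF S (\<lambda>_. \<eta>) w0 xs t" for t
  define c where "c t = r t * \<eta>" for t
  have state: "adascale_state P M g gradF S (\<lambda>_. \<eta>) w0 xs t = (sgd_iterate c w0 t, \<Sum>s<t. r s)" for t
    unfolding r_def by (rule adascale_state_eq_sgd_iterate) (simp add: c_def r_def)
  have r_eq: "r t = gain (sgd_iterate c w0 t)" for t
  proof -
    have "r t = gain (fst (adascale_state P M g gradF S (\<lambda>_. \<eta>) w0 xs t))"
      unfolding r_def adascale_r_def ..
    then show ?thesis by (simp only: state fst_conv)
  qed
  have c_eq: "c t = gain (sgd_iterate c w0 t) * \<eta>" for t
    using c_def[of t] by (simp only: r_eq)
  define T where "T = adascale_T P M g gradF S (\<lambda>_. \<eta>) w0 xs TSI"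
  have "T \<noteq> 0"
    unfolding T_def adascale_T_def state snd_conv
    using Least_partial_sum_ge_neq_0[of r TSI] gain_iterate(1) TSI_pos by (simp add: r_eq)
  then have "(\<Sum>t<T. r t) / real T * real T = (\<Sum>t<T. r t)" by simp
  with expected_suboptimality_le_powr[OF c_eq \<open>T \<noteq> 0\<close>] show ?thesis
    unfolding Let_def T_def[symmetric] r_def[symmetric] state by (simp add: r_eq)
qed

end
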